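(* If $\mathsf B$ is a bad piece, then for any two distinct vertices $v_1,v_2\in V(\mathsf B)$ there exists a subgraph of $\mathsf B$ which is a rainbow path with terminals $v_1$ and $v_2$.
   Context: A (colored) graph is a finite set $\mathsf G$ of pairs $(e,\alpha)$, where the $e$'s are pairwise distinct 2-element subsets of a vertex set and $\alpha$ is a color (colors may repeat). $V(\mathsf G)$ is its vertex set and $\chi(\mathsf G)$ the set of colors used; $\mathsf G$ is rainbow if $|\chi(\mathsf G)|=|\mathsf G|$ and almost rainbow if $|\chi(\mathsf G)|=|\mathsf G|-1$. A subgraph is a subset. A path is a colored graph whose underlying uncolored edges form a path with two distinct terminals. A theta graph is a union $\mathsf P_1\cup\mathsf P_2\cup\mathsf P_3$ of three paths with the same terminals $s\neq t$ such that any two of them share no vertex other than $s,t$ and no underlying uncolored edge. A bad piece is an almost rainbow theta graph with at least $6$ vertices that is the union of three rainbow paths $\mathsf P_1,\mathsf P_2,\mathsf P_3$ as in the definition of a theta graph. *)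

theory Defs
  imports Main
begin

text \<open>A colored graph: a finite set of pairs (e, alpha), e a 2-element set of vertices,
  the underlying uncolored edges pairwise distinct (colors may repeat).\<close>
type_synonym ('v, 'c) cgraph = "('v set \<times> 'c) set"

definition colored_graph :: "('v, 'c) cgraph \<Rightarrow> bool" where
  "colored_graph G \<longleftrightarrow> finite G \<and> (\<forall>p\<in>G. card (fst p) = 2) \<and> inj_on fst G"

definition verts :: "('v, 'c) cgraph \<Rightarrow> 'v set" where
  "verts G = \<Union> (fst ` G)"

definition uedges :: "('v, 'c) cgraph \<Rightarrow> 'v set set" where
  "uedges G = fst ` G"

definition colors :: "('v, 'c) cgraph \<Rightarrow> 'c set" where
  "colors G = snd ` G"

definition rainbow :: "('v, 'c) cgraph \<Rightarrow> bool" where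
  "rainbow G \<longleftrightarrow> card (colors G) = card G"

definition almost_rainbow :: "('v, 'c) cgraph \<Rightarrow> bool" where
  "almost_rainbow G \<longleftrightarrow> card (colors G) + 1 = card G"

definition is_path :: "('v, 'c) cgraph \<Rightarrow> 'v \<Rightarrow> 'v \<Rightarrow> bool" where
  "is_path G s t \<longleftrightarrow> colored_graph G \<and>
     (\<exists>vs. distinct vs \<and> length vs \<ge> 2 \<and> hd vs = s \<and> last vs = t \<and>
        uedges G = {{vs ! i, vs ! Suc i} | i. Suc i < length vs})"

definition theta_decomp :: "('v, 'c) cgraph \<Rightarrow> 'v \<Rightarrow> 'v \<Rightarrow>
    ('v, 'c) cgraph \<Rightarrow> ('v, 'c) cgraph \<Rightarrow> ('v, 'c) cgraph \<Rightarrow> bool" where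
  "theta_decomp G s t P1 P2 P3 \<longleftrightarrow> s \<noteq> t \<and>
     is_path P1 s t \<and> is_path P2 s t \<and> is_path P3 s t \<and>
     verts P1 \<inter> verts P2 \<subseteq> {s, t} \<and> verts P1 \<inter> verts P3 \<subseteq> {s, t} \<and>
     verts P2 \<inter> verts P3 \<subseteq> {s, t} \<and>
     uedges P1 \<inter> uedges P2 = {} \<and> uedges P1 \<inter> uedges P3 = {} \<and>
     uedges P2 \<inter> uedges P3 = {} \<and>
     G = P1 \<union> P2 \<union> P3"

definition theta_graph :: "('v, 'c) cgraph \<Rightarrow> bool" where
  "theta_graph G \<longleftrightarrow> (\<exists>s t P1 P2 P3. theta_decomp G s t P1 P2 P3)"

definition bad_piece :: "('v, 'c) cgraph \<Rightarrow> bool" where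
  "bad_piece B \<longleftrightarrow> colored_graph B \<and> almost_rainbow B \<and> card (verts B) \<ge> 6 \<and>
     (\<exists>s t P1 P2 P3. theta_decomp B s t P1 P2 P3 \<and>
        rainbow P1 \<and> rainbow P2 \<and> rainbow P3)"

end

theory Submission
  imports Defs
begin

(*
  A bad piece is almost rainbow, so exactly two of its edges e and f share a colour, and
  deleting either of them leaves a rainbow graph. Any two vertices of a theta graph lie on
  the cycle formed by two of its three paths. That cycle splits into two edge-disjoint
  paths between the two vertices, and since e and f are distinct edges, one of these paths
  avoids e or avoids f and is therefore rainbow.
*)

definition path_edges :: "'v list \<Rightarrow> 'v set set" where
  "path_edges vs = (\<lambda>i. {vs ! i, vs ! Suc i}) ` {..< length vs - 1}"

lemma path_edges_conv: "{{vs ! i, vs ! Suc i} | i. Suc i < length vs} = path_edges vs"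
  by (auto simp: path_edges_def)

lemma path_edges_Nil [simp]: "path_edges [] = {}"
  and path_edges_singleton [simp]: "path_edges [x] = {}"
  by (auto simp: path_edges_def)

lemma path_edges_Cons_Cons [simp]:
  "path_edges (x # y # zs) = insert {x, y} (path_edges (y # zs))"
  by (simp add: path_edges_def lessThan_Suc_eq_insert_0 image_image)

lemma path_edges_Cons:
  "path_edges (x # xs) = (if xs = [] then {} else insert {x, hd xs} (path_edges xs))"
  by (cases xs) auto

lemma path_edges_append:
  "path_edges (xs @ b # ys) = path_edges (xs @ [b]) \<union> path_edges (b # ys)"
  by (induction xs rule: induct_list012) auto

lemma path_edges_snoc:
  "xs \<noteq> [] \<Longrightarrow> path_edges (xs @ [y]) = insert {last xs, y} (path_edges xs)"
  by (induction xs) (auto simp: path_edges_Cons)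

lemma path_edges_rev [simp]: "path_edges (rev xs) = path_edges xs"
  by (induction xs) (auto simp: path_edges_Cons path_edges_snoc last_rev insert_commute)

lemma Union_path_edges_Cons: "xs \<noteq> [] \<Longrightarrow> \<Union> (path_edges (x # xs)) = insert x (set xs)"
  by (induction xs arbitrary: x) (auto simp: path_edges_Cons)

lemma Union_path_edges:
  assumes "length vs \<ge> 2"
  shows "\<Union> (path_edges vs) = set vs"
proof -
  obtain x xs where "vs = x # xs" "xs \<noteq> []"
    using assms by (cases vs) (auto simp: Suc_le_length_iff)
  then show ?thesis
    by (simp add: Union_path_edges_Cons)
qed

lemma path_edge_subset_set: "e \<in> path_edges vs \<Longrightarrow> e \<subseteq> set vs"
  by (auto simp: path_edges_def)

lemma card_path_edge: "distinct vs \<Longrightarrow> e \<in> path_edges vs \<Longrightarrow> card e = 2"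
  by (auto simp: path_edges_def nth_eq_iff_index_eq)

lemma path_edges_hd_last:
  assumes "distinct vs" and "{hd vs, last vs} \<in> path_edges vs"
  shows "length vs = 2"
proof -
  have "vs \<noteq> []"
    using assms(2) by auto
  then obtain i where i: "i < length vs - 1" "{vs ! i, vs ! Suc i} = {vs ! 0, vs ! (length vs - 1)}"
    using assms(2) by (auto simp: path_edges_def hd_conv_nth last_conv_nth)
  moreover have "i < length vs" "0 < length vs"
    using i(1) by auto
  ultimately show ?thesis
    using assms(1) by (auto simp: doubleton_eq_iff nth_eq_iff_index_eq)
qed

definition vertex_path :: "'v list \<Rightarrow> 'v \<Rightarrow> 'v \<Rightarrow> bool" where
  "vertex_path vs s t \<longleftrightarrow> distinct vs \<and> length vs \<ge> 2 \<and> hd vs = s \<and> last vs = t"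

lemma path_edges_disjoint:
  assumes xs: "vertex_path xs s t" and ys: "vertex_path ys s t"
    and meet: "set xs \<inter> set ys \<subseteq> {s, t}"
    and not_both_edges: "length xs \<noteq> 2 \<or> length ys \<noteq> 2"
  shows "path_edges xs \<inter> path_edges ys = {}"
proof (rule ccontr)
  assume "path_edges xs \<inter> path_edges ys \<noteq> {}"
  then obtain e where ex: "e \<in> path_edges xs" and ey: "e \<in> path_edges ys"
    by blast
  have "e \<subseteq> {s, t}"
    using path_edge_subset_set[OF ex] path_edge_subset_set[OF ey] meet by blast
  moreover have "card e = 2"
    using card_path_edge ex xs by (auto simp: vertex_path_def)
  moreover have "card {s, t} \<le> 2"
    by (cases "s = t") auto
  ultimately have "e = {s, t}"
    by (intro card_seteq) auto
  then show False
    using ex ey xs ys not_both_edges path_edges_hd_last by (auto simp: vertex_path_def)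
qed

definition cycle_edges :: "'v list \<Rightarrow> 'v set set" where
  "cycle_edges c = path_edges (c @ [hd c])"

lemma cycle_edges_rotate1 [simp]: "cycle_edges (rotate1 c) = cycle_edges c"
proof (cases c)
  case (Cons a as)
  show ?thesis
  proof (cases "as = []")
    case False
    then have "path_edges (as @ [a, hd as]) = insert {a, hd as} (insert {last as, a} (path_edges as))"
      using path_edges_append[of as a "[hd as]"] path_edges_snoc[of as a] by auto
    then show ?thesis
      using Cons False by (simp add: cycle_edges_def path_edges_Cons path_edges_snoc insert_commute)
  qed (simp add: Cons)
qed simp

lemma cycle_edges_rotate [simp]: "cycle_edges (rotate n c) = cycle_edges c"
  by (induction n) simp_all

lemma cycle_of_paths:
  assumes xs: "vertex_path xs s t" and ys: "vertex_path ys s t"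
    and meet: "set xs \<inter> set ys \<subseteq> {s, t}"
    and disj: "path_edges xs \<inter> path_edges ys = {}"
  shows "\<exists>c. distinct c \<and> 3 \<le> length c \<and> set c = set xs \<union> set ys \<and>
    cycle_edges c = path_edges xs \<union> path_edges ys"
proof -
  obtain xm where xm: "xs = xm @ [t]" "xm \<noteq> []" "hd xm = s"
    using xs unfolding vertex_path_def by (cases xs rule: rev_cases) (auto simp: Suc_le_length_iff)
  obtain ym where ym: "ys = s # ym" "ym \<noteq> []" "last ym = t"
    using ys unfolding vertex_path_def by (cases ys) (auto simp: Suc_le_length_iff)
  obtain r where r: "rev ys = t # r"
    using ym by (cases "rev ym") auto
  define c where "c = xm @ rev ym"
  have "c @ [hd c] = xm @ t # r"
    using xm ym r by (simp add: c_def)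
  then have "cycle_edges c = path_edges (xm @ [t]) \<union> path_edges (t # r)"
    using path_edges_append[of xm t r] by (simp add: cycle_edges_def)
  then have edges: "cycle_edges c = path_edges xs \<union> path_edges ys"
    using xm(1) r path_edges_rev[of ys] by simp
  have "t \<notin> set xm" "s \<notin> set ym"
    using xs ys xm ym by (auto simp: vertex_path_def)
  then have "distinct c"
    using xs ys xm ym meet by (auto simp: c_def vertex_path_def)
  moreover have "set c = set xs \<union> set ys"
    using xm ym hd_in_set[of xm] last_in_set[of ym] by (auto simp: c_def)
  moreover have "3 \<le> length c"
  proof (rule ccontr)
    assume "\<not> 3 \<le> length c"
    moreover have "0 < length xm" "0 < length ym"
      using xm(2) ym(2) by auto
    ultimately have "length xm = 1" "length ym = 1"
      unfolding c_def length_append length_rev by linarith+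
    then have "xs = [s, t]" "ys = [s, t]"
      using xm ym by (cases xm; cases ym; simp)+
    then show False
      using disj by simp
  qed
  ultimately show ?thesis
    using edges by blast
qed

lemma cycle_arcs_from_hd:
  assumes r: "distinct r" "3 \<le> length r" and k: "0 < k" "k < length r"
  defines "ws1 \<equiv> take (Suc k) r" and "ws2 \<equiv> rev (drop k r @ [hd r])"
  shows "vertex_path ws1 (hd r) (r ! k)" and "vertex_path ws2 (hd r) (r ! k)"
    and "path_edges ws1 \<union> path_edges ws2 = cycle_edges r"
    and "path_edges ws1 \<inter> path_edges ws2 = {}"
proof -
  have take_k: "take (Suc k) r = take k r @ [r ! k]"
    using k by (simp add: take_Suc_conv_app_nth)
  have drop_k: "drop k r = r ! k # drop (Suc k) r"
    using k by (simp add: Cons_nth_drop_Suc)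
  have "hd r \<in> set (take k r)"
    using k by (cases r) (auto simp: take_Cons')
  then have "hd r \<notin> set (drop k r)"
    using set_take_disj_set_drop_if_distinct[OF r(1), of k k] by blast
  then show path2: "vertex_path ws2 (hd r) (r ! k)"
    using r k by (auto simp: ws2_def vertex_path_def last_rev hd_drop_conv_nth)
  have "last ws1 = r ! k"
    using take_k by (simp add: ws1_def)
  then show path1: "vertex_path ws1 (hd r) (r ! k)"
    using r k by (simp add: ws1_def vertex_path_def hd_take)
  have "r @ [hd r] = take k r @ r ! k # (drop (Suc k) r @ [hd r])"
    using id_take_nth_drop[OF k(2)] by simp
  then have "cycle_edges r = path_edges (take k r @ r ! k # (drop (Suc k) r @ [hd r]))"
    unfolding cycle_edges_def by (rule arg_cong)
  also have "\<dots> = path_edges ws1 \<union> path_edges (r ! k # drop (Suc k) r @ [hd r])"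
    using path_edges_append[of "take k r" "r ! k" "drop (Suc k) r @ [hd r]"] take_k
    by (simp add: ws1_def)
  finally have "cycle_edges r = path_edges ws1 \<union> path_edges (r ! k # drop (Suc k) r @ [hd r])" .
  moreover have "path_edges ws2 = path_edges (r ! k # drop (Suc k) r @ [hd r])"
    unfolding ws2_def path_edges_rev drop_k by simp
  ultimately show "path_edges ws1 \<union> path_edges ws2 = cycle_edges r"
    by simp
  have "set ws1 \<inter> set ws2 \<subseteq> {hd r, r ! k}"
    using set_take_disj_set_drop_if_distinct[OF r(1), of "Suc k" "Suc k"] drop_k
    by (auto simp: ws1_def ws2_def)
  moreover have "length ws1 \<noteq> 2 \<or> length ws2 \<noteq> 2"
    using r k by (auto simp: ws1_def ws2_def)
  ultimately show "path_edges ws1 \<inter> path_edges ws2 = {}"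
    using path_edges_disjoint[OF path1 path2] by blast
qed

lemma cycle_arcs:
  assumes c: "distinct c" "3 \<le> length c" and v: "v1 \<in> set c" "v2 \<in> set c" "v1 \<noteq> v2"
  obtains ws1 ws2 where "vertex_path ws1 v1 v2" "vertex_path ws2 v1 v2"
    "path_edges ws1 \<union> path_edges ws2 = cycle_edges c"
    "path_edges ws1 \<inter> path_edges ws2 = {}"
proof -
  obtain i where i: "i < length c" "c ! i = v1"
    using v(1) by (auto simp: in_set_conv_nth)
  define r where "r = rotate i c"
  have "c \<noteq> []"
    using i(1) by auto
  then have r: "distinct r" "3 \<le> length r" "set r = set c" "cycle_edges r = cycle_edges c" "hd r = v1"
    using c i by (auto simp: r_def hd_rotate_conv_nth)
  have "v2 \<in> set r"
    using v(2) r(3) by simp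
  then obtain k where k: "k < length r" "r ! k = v2"
    by (auto simp: in_set_conv_nth)
  have "0 < k"
    using k r v(3) by (cases k) (auto simp: hd_conv_nth)
  show thesis
    using cycle_arcs_from_hd[OF r(1,2) \<open>0 < k\<close> k(1)] that r k by simp
qed

lemma is_path_iff:
  "is_path G s t \<longleftrightarrow> colored_graph G \<and> (\<exists>vs. vertex_path vs s t \<and> uedges G = path_edges vs)"
  by (auto simp: is_path_def vertex_path_def path_edges_conv)

lemma is_pathE:
  assumes "is_path P s t"
  obtains vs where "vertex_path vs s t" "uedges P = path_edges vs" "verts P = set vs"
proof -
  obtain vs where vs: "vertex_path vs s t" "uedges P = path_edges vs"
    using assms by (auto simp: is_path_iff)
  moreover have "verts P = set vs"
    using vs Union_path_edges[of vs] by (simp add: verts_def uedges_def vertex_path_def)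
  ultimately show thesis
    using that by blast
qed

lemma is_path_restrict:
  assumes "colored_graph B" "vertex_path vs s t" "path_edges vs \<subseteq> uedges B"
  shows "is_path {p \<in> B. fst p \<in> path_edges vs} s t"
proof -
  have "colored_graph {p \<in> B. fst p \<in> path_edges vs}"
    using assms(1) by (auto simp: colored_graph_def intro: inj_on_subset)
  moreover have "uedges {p \<in> B. fst p \<in> path_edges vs} = path_edges vs"
    using assms(3) by (auto simp: uedges_def)
  ultimately show ?thesis
    using assms(2) by (auto simp: is_path_iff)
qed

lemma rainbow_iff_inj_on: "finite G \<Longrightarrow> rainbow G \<longleftrightarrow> inj_on snd G"
  by (auto simp: rainbow_def colors_def card_image eq_card_imp_inj_on)

lemma rainbow_subset: "finite G \<Longrightarrow> rainbow G \<Longrightarrow> P \<subseteq> G \<Longrightarrow> rainbow P"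
  by (simp add: rainbow_iff_inj_on finite_subset inj_on_subset)

lemma almost_rainbow_repeated_color:
  assumes "finite G" "almost_rainbow G"
  obtains e f where "e \<in> G" "f \<in> G" "e \<noteq> f" "snd e = snd f"
proof -
  have "\<not> inj_on snd G"
    using assms card_image by (fastforce simp: almost_rainbow_def colors_def)
  then show thesis
    using that by (auto simp: inj_on_def)
qed

lemma almost_rainbow_remove_repeat:
  assumes "finite G" "almost_rainbow G" "e \<in> G" "f \<in> G" "e \<noteq> f" "snd e = snd f"
  shows "rainbow (G - {e})"
proof -
  have "snd ` (G - {e}) = snd ` G"
    using assms(3-6) by (auto simp: image_iff)
  then have "card (colors (G - {e})) = card (G - {e})"
    using assms(1-3) by (simp add: almost_rainbow_def colors_def)
  then show ?thesis
    by (simp add: rainbow_def)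
qed

lemma rainbow_path_in_cycle:
  assumes B: "colored_graph B" "almost_rainbow B"
    and c: "distinct c" "3 \<le> length c" "cycle_edges c \<subseteq> uedges B"
    and v: "v1 \<in> set c" "v2 \<in> set c" "v1 \<noteq> v2"
  shows "\<exists>P. P \<subseteq> B \<and> is_path P v1 v2 \<and> rainbow P"
proof -
  have fin: "finite B" and inj: "inj_on fst B"
    using B(1) by (auto simp: colored_graph_def)
  obtain e f where ef: "e \<in> B" "f \<in> B" "e \<noteq> f" "snd e = snd f"
    using almost_rainbow_repeated_color[OF fin B(2)] .
  then have "fst e \<noteq> fst f"
    using inj by (auto simp: inj_on_def)
  obtain ws1 ws2 where arcs: "vertex_path ws1 v1 v2" "vertex_path ws2 v1 v2"
    "path_edges ws1 \<union> path_edges ws2 = cycle_edges c"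
    "path_edges ws1 \<inter> path_edges ws2 = {}"
    using cycle_arcs[OF c(1,2) v] .
  have "\<exists>ws \<in> {ws1, ws2}. \<exists>g \<in> {e, f}. fst g \<notin> path_edges ws"
    using arcs(4) \<open>fst e \<noteq> fst f\<close> by blast
  then obtain ws g where ws: "vertex_path ws v1 v2" "path_edges ws \<subseteq> uedges B"
    and g: "g \<in> {e, f}" "fst g \<notin> path_edges ws"
    using arcs c(3) by blast
  define P where "P = {p \<in> B. fst p \<in> path_edges ws}"
  have "is_path P v1 v2"
    unfolding P_def using is_path_restrict[OF B(1) ws] .
  moreover have "rainbow (B - {g})"
    using g(1) almost_rainbow_remove_repeat[OF fin B(2) ef]
      almost_rainbow_remove_repeat[OF fin B(2) ef(2,1) ef(3)[symmetric] ef(4)[symmetric]]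
    by auto
  then have "rainbow P"
    using fin g(2) by (auto simp: P_def intro: rainbow_subset)
  moreover have "P \<subseteq> B"
    by (auto simp: P_def)
  ultimately show ?thesis
    by blast
qed

lemma cycle_of_two_paths:
  assumes "is_path P s t" "is_path Q s t"
    and "verts P \<inter> verts Q \<subseteq> {s, t}" "uedges P \<inter> uedges Q = {}"
  shows "\<exists>c. distinct c \<and> 3 \<le> length c \<and> set c = verts P \<union> verts Q \<and>
    cycle_edges c = uedges P \<union> uedges Q"
proof -
  obtain xs ys where "vertex_path xs s t" "uedges P = path_edges xs" "verts P = set xs"
    and "vertex_path ys s t" "uedges Q = path_edges ys" "verts Q = set ys"
    using assms(1,2) by (meson is_pathE)
  then show ?thesis
    using cycle_of_paths assms(3,4) by metis
qed

lemma verts_union: "verts (G \<union> H) = verts G \<union> verts H"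
  by (auto simp: verts_def)

lemma theta_cycle_through:
  assumes "theta_decomp G s t P1 P2 P3" "v1 \<in> verts G" "v2 \<in> verts G"
  shows "\<exists>c. distinct c \<and> 3 \<le> length c \<and> v1 \<in> set c \<and> v2 \<in> set c \<and> cycle_edges c \<subseteq> uedges G"
proof -
  have paths: "is_path P1 s t" "is_path P2 s t" "is_path P3 s t"
    and G: "G = P1 \<union> P2 \<union> P3"
    using assms(1) by (auto simp: theta_decomp_def)
  have "{v1, v2} \<subseteq> verts P1 \<union> verts P2 \<union> verts P3"
    using assms(2,3) G by (simp add: verts_union)
  then consider "{v1, v2} \<subseteq> verts P1 \<union> verts P2" | "{v1, v2} \<subseteq> verts P1 \<union> verts P3"
    | "{v1, v2} \<subseteq> verts P2 \<union> verts P3"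
    by blast
  then obtain P Q where PQ: "is_path P s t" "is_path Q s t" "verts P \<inter> verts Q \<subseteq> {s, t}"
      "uedges P \<inter> uedges Q = {}" "P \<union> Q \<subseteq> G" "{v1, v2} \<subseteq> verts P \<union> verts Q"
  proof cases
    case 1
    then show thesis
      using that[OF paths(1,2)] assms(1) G by (auto simp: theta_decomp_def)
  next
    case 2
    then show thesis
      using that[OF paths(1,3)] assms(1) G by (auto simp: theta_decomp_def)
  next
    case 3
    then show thesis
      using that[OF paths(2,3)] assms(1) G by (auto simp: theta_decomp_def)
  qed
  obtain c where c: "distinct c" "3 \<le> length c" "set c = verts P \<union> verts Q"
      "cycle_edges c = uedges P \<union> uedges Q"
    using cycle_of_two_paths[OF PQ(1-4)] by blast
  have "uedges P \<union> uedges Q \<subseteq> uedges G"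
    using PQ(5) by (auto simp: uedges_def)
  then show ?thesis
    using c PQ(6) by (intro exI[of _ c]) auto
qed

theorem mainTheorem5:
  fixes B :: "('v, 'c) cgraph"
  assumes "bad_piece B"
    and "v1 \<in> verts B" and "v2 \<in> verts B" and "v1 \<noteq> v2"
  shows "\<exists>P. P \<subseteq> B \<and> is_path P v1 v2 \<and> rainbow P"
proof -
  obtain s t P1 P2 P3 where B: "colored_graph B" "almost_rainbow B"
    and theta: "theta_decomp B s t P1 P2 P3"
    using assms(1) unfolding bad_piece_def by blast
  obtain c where "distinct c" "3 \<le> length c" "v1 \<in> set c" "v2 \<in> set c" "cycle_edges c \<subseteq> uedges B"
    using theta_cycle_through[OF theta assms(2,3)] by blast
  then show ?thesis
    using rainbow_path_in_cycle[OF B] assms(4) by blast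
qed

end
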